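(* For all real $0\le a\le b\le 1$ and all $\epsilon\in(0,\tfrac12)$, $$\frac{(\sqrt b+\sqrt a)^{2(1+\epsilon)}+(\sqrt b-\sqrt a)^{2(1+\epsilon)}}{2}-a^{1+\epsilon}-b^{1+\epsilon}\le (3\epsilon+2\epsilon^2)a+(b^\epsilon-a^\epsilon)a.$$ *)

theory Defs
  imports Complex_Main
begin

end

theory Submission
  imports Defs
begin

text \<open>Put \<open>x = sqrt a\<close>, \<open>y = sqrt b\<close> and \<open>p = 2 + 2\<epsilon>\<close>. The function
  \<open>F x = ((y + x)^p + (y - x)^p) / 2 - y^p\<close> has \<open>F 0 = F' 0 = 0\<close>, and since \<open>t^(p - 2)\<close> is
  concave (as \<open>p - 2 = 2\<epsilon> \<le> 1\<close>) its second derivative is at most \<open>p (p - 1) y^(p - 2)\<close>.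
  Integrating twice gives \<open>F x \<le> (1 + \<epsilon>)(1 + 2\<epsilon>) a b^\<epsilon>\<close>, and \<open>b^\<epsilon> \<le> 1\<close> bounds the part
  \<open>(3\<epsilon> + 2\<epsilon>\<^sup>2) a b^\<epsilon>\<close> of this by \<open>(3\<epsilon> + 2\<epsilon>\<^sup>2) a\<close>.\<close>

lemma powr_plus_minus_le:
  fixes r x y :: real
  assumes "0 \<le> r" "r \<le> 1" "0 \<le> x" "x < y"
  shows "(y + x) powr r + (y - x) powr r \<le> 2 * y powr r"
proof -
  define f where "f t = (y + t) powr r + (y - t) powr r" for t
  have "f x \<le> f 0"
  proof (rule DERIV_nonpos_imp_decreasing_open[OF \<open>0 \<le> x\<close>])
    fix t assume t: "0 < t" "t < x"
    have deriv: "(f has_real_derivative r * ((y + t) powr (r - 1) - (y - t) powr (r - 1))) (at t)"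
      unfolding f_def using t assms
      by (auto intro!: derivative_eq_intros simp: algebra_simps)
    have "(y + t) powr (r - 1) \<le> (y - t) powr (r - 1)"
      using t assms by (intro powr_mono2') auto
    then have "r * ((y + t) powr (r - 1) - (y - t) powr (r - 1)) \<le> 0"
      using assms by (intro mult_nonneg_nonpos) auto
    with deriv show "\<exists>d. (f has_real_derivative d) (at t) \<and> d \<le> 0" by blast
  next
    show "continuous_on {0..x} f"
      unfolding f_def using assms by (intro continuous_intros) auto
  qed
  then show ?thesis by (simp add: f_def)
qed

lemma powr_plus_minus_diff_le:
  fixes r x y :: real
  assumes "0 \<le> r" "r \<le> 1" "0 \<le> x" "x < y"
  shows "(y + x) powr (r + 1) - (y - x) powr (r + 1) \<le> 2 * (r + 1) * x * y powr r"
proof -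
  define f where
    "f t = (y + t) powr (r + 1) - (y - t) powr (r + 1) - 2 * (r + 1) * t * y powr r" for t
  have "f x \<le> f 0"
  proof (rule DERIV_nonpos_imp_decreasing_open[OF \<open>0 \<le> x\<close>])
    fix t assume t: "0 < t" "t < x"
    have deriv: "(f has_real_derivative (r + 1) * ((y + t) powr r + (y - t) powr r - 2 * y powr r)) (at t)"
      unfolding f_def using t assms
      by (auto intro!: derivative_eq_intros simp: algebra_simps)
    have "(y + t) powr r + (y - t) powr r \<le> 2 * y powr r"
      using t assms by (intro powr_plus_minus_le) auto
    then have "(r + 1) * ((y + t) powr r + (y - t) powr r - 2 * y powr r) \<le> 0"
      using assms by (intro mult_nonneg_nonpos) auto
    with deriv show "\<exists>d. (f has_real_derivative d) (at t) \<and> d \<le> 0" by blast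
  next
    show "continuous_on {0..x} f"
      unfolding f_def using assms by (intro continuous_intros) auto
  qed
  then show ?thesis by (simp add: f_def)
qed

lemma powr_plus_minus_avg_le:
  fixes r x y :: real
  assumes "0 \<le> r" "r \<le> 1" "0 \<le> x" "x \<le> y"
  shows "((y + x) powr (r + 2) + (y - x) powr (r + 2)) / 2 - y powr (r + 2)
           \<le> (r + 2) * (r + 1) / 2 * x\<^sup>2 * y powr r"
proof -
  define f where "f t = ((y + t) powr (r + 2) + (y - t) powr (r + 2)) / 2 - y powr (r + 2)
                          - (r + 2) * (r + 1) / 2 * t\<^sup>2 * y powr r" for t
  have "f x \<le> f 0"
  proof (rule DERIV_nonpos_imp_decreasing_open[OF \<open>0 \<le> x\<close>])
    fix t assume t: "0 < t" "t < x"
    have deriv: "(f has_real_derivative (r + 2) / 2 *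
            ((y + t) powr (r + 1) - (y - t) powr (r + 1) - 2 * (r + 1) * t * y powr r)) (at t)"
      unfolding f_def using t assms
      by (auto intro!: derivative_eq_intros simp: field_simps)
    have "(y + t) powr (r + 1) - (y - t) powr (r + 1) \<le> 2 * (r + 1) * t * y powr r"
      using t assms by (intro powr_plus_minus_diff_le) auto
    then have "(r + 2) / 2 *
        ((y + t) powr (r + 1) - (y - t) powr (r + 1) - 2 * (r + 1) * t * y powr r) \<le> 0"
      using assms by (intro mult_nonneg_nonpos) auto
    with deriv show "\<exists>d. (f has_real_derivative d) (at t) \<and> d \<le> 0" by blast
  next
    show "continuous_on {0..x} f"
      unfolding f_def using assms by (intro continuous_intros continuous_on_powr') auto
  qed
  then show ?thesis by (simp add: f_def)
qed

lemma sqrt_powr_double: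
  fixes x s :: real
  assumes "0 \<le> x"
  shows "sqrt x powr (2 * s) = x powr s"
  using assms by (simp add: powr_half_sqrt [symmetric] powr_powr)

theorem lemma2p4:
  fixes a b \<epsilon> :: real
  assumes "0 \<le> a" and "a \<le> b" and "b \<le> 1"
    and "0 < \<epsilon>" and "\<epsilon> < 1/2"
  shows "((sqrt b + sqrt a) powr (2 * (1 + \<epsilon>)) + (sqrt b - sqrt a) powr (2 * (1 + \<epsilon>))) / 2
           - a powr (1 + \<epsilon>) - b powr (1 + \<epsilon>)
         \<le> (3 * \<epsilon> + 2 * \<epsilon>^2) * a + (b powr \<epsilon> - a powr \<epsilon>) * a"
proof -
  define c where "c = 1 + 3 * \<epsilon> + 2 * \<epsilon>^2"
  have exponent: "2 * \<epsilon> + 2 = 2 * (1 + \<epsilon>)"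
    and coefficient: "(2 * \<epsilon> + 2) * (2 * \<epsilon> + 1) / 2 = c"
    by (simp_all add: c_def algebra_simps power2_eq_square)
  have "((sqrt b + sqrt a) powr (2 * \<epsilon> + 2) + (sqrt b - sqrt a) powr (2 * \<epsilon> + 2)) / 2
          - sqrt b powr (2 * \<epsilon> + 2)
        \<le> (2 * \<epsilon> + 2) * (2 * \<epsilon> + 1) / 2 * (sqrt a)\<^sup>2 * sqrt b powr (2 * \<epsilon>)"
    using assms by (intro powr_plus_minus_avg_le) auto
  then have avg:
      "((sqrt b + sqrt a) powr (2 * (1 + \<epsilon>)) + (sqrt b - sqrt a) powr (2 * (1 + \<epsilon>))) / 2
          - b powr (1 + \<epsilon>) \<le> c * a * b powr \<epsilon>"
    using assms unfolding coefficient unfolding exponent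
    by (simp only: sqrt_powr_double real_sqrt_pow2 order_trans [OF \<open>0 \<le> a\<close> \<open>a \<le> b\<close>])
  have "b powr \<epsilon> \<le> 1"
    using assms by (intro powr_le1) auto
  then have "(c - 1) * a * b powr \<epsilon> \<le> (c - 1) * a"
    using assms by (intro mult_left_le) (auto simp: c_def)
  moreover have "a powr (1 + \<epsilon>) = a powr \<epsilon> * a"
    using assms by (cases "a = 0") (auto simp: powr_add)
  ultimately show ?thesis
    using avg by (simp add: c_def algebra_simps)
qed

end
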